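(* Let $\mathbb{G}$ be the bouquet described as follows: on the boundary circle of its vertex choose $14$ points $p_0,p_1,\dots,p_{13}$ in cyclic order; $\mathbb{G}$ has three non-orientable loops with ends at $\{p_1,p_6\}$, $\{p_2,p_9\}$, $\{p_5,p_{12}\}$ and four orientable loops with ends at $\{p_0,p_3\}$, $\{p_4,p_7\}$, $\{p_8,p_{11}\}$, $\{p_{10},p_{13}\}$. Then $\mathbb{G}$ is not pseudo-orientable, and its quasi-tree generating polynomial $p_{\mathbb{G}}=\sum_Q\prod_{e\in Q}x_e$ (sum over quasi-trees $Q$) is Hurwitz stable.
   Context: A bouquet is a ribbon graph with a single vertex disc $v$ and loops attached along pairs of disjoint segments (ends) of the boundary of $v$. A loop $e$ is orientable if $v\cup e$ is an annulus and non-orientable if it is a Möbius band. A quasi-tree is a set $Q$ of loops such that $v$ together with the loops in $Q$ has exactly one boundary component. A bouquet is pseudo-orientable if its vertex boundary circle is the union of two closed arcs $S_1,S_2$ meeting in exactly two points such that both ends of each orientable loop lie in the interior of one $S_i$ and each non-orientable loop has one end in the interior of each of $S_1,S_2$. A polynomial $f\in\mathbb{C}[z_1,\dots,z_n]$ is Hurwitz stable if $f\ne0$ whenever $\mathrm{Re}(z_i)>0$ for all $i$. *)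

theory Defs
  imports Complex_Main
begin

text \<open>
Combinatorial model of a bouquet (signed chord diagram).
The vertex boundary circle carries N end segments at positions 0,...,N-1 in cyclic
order. loop_of i is the loop whose end sits at position i (each loop has exactly two
ends), ori e says whether loop e is orientable.
Each end segment i has two endpoints (i,False) (the start a_i) and (i,True)
(the end b_i) in the cyclic direction. The boundary of v together with the loops in Q
is the union of:
  - the vertex boundary arcs from b_i to a_(i+1 mod N);
  - for an end i of a loop not in Q, the end segment itself (a_i to b_i);
  - for a loop in Q with ends i, j: its two sides, joining a_i-b_j and b_i-a_j
    if the loop is orientable (annulus), and a_i-a_j and b_i-b_j if it is
    non-orientable (Moebius band).
Boundary components are the connected components of this 2-regular graph.
\<close>

definition bdry_adj ::
  "nat \<Rightarrow> (nat \<Rightarrow> 'e) \<Rightarrow> ('e \<Rightarrow> bool) \<Rightarrow> 'e set \<Rightarrow> nat \<times> bool \<Rightarrow> nat \<times> bool \<Rightarrow> bool" where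
  "bdry_adj N loop_of ori Q x y \<longleftrightarrow>
     (case x of (i, s) \<Rightarrow> case y of (j, t) \<Rightarrow>
        i < N \<and> j < N \<and>
        ((s \<and> \<not> t \<and> j = Suc i mod N) \<or>
         (\<not> s \<and> t \<and> i = Suc j mod N) \<or>
         (loop_of i \<notin> Q \<and> j = i \<and> s \<noteq> t) \<or>
         (loop_of i \<in> Q \<and> j \<noteq> i \<and> loop_of j = loop_of i \<and>
            (if ori (loop_of i) then s \<noteq> t else s = t))))"

definition bdry_points :: "nat \<Rightarrow> (nat \<times> bool) set" where
  "bdry_points N = {..<N} \<times> UNIV"

definition num_boundary_components ::
  "nat \<Rightarrow> (nat \<Rightarrow> 'e) \<Rightarrow> ('e \<Rightarrow> bool) \<Rightarrow> 'e set \<Rightarrow> nat" where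
  "num_boundary_components N loop_of ori Q =
     card (bdry_points N //
           ({(x, y). x \<in> bdry_points N \<and> y \<in> bdry_points N \<and>
                     bdry_adj N loop_of ori Q x y}\<^sup>*))"

definition loops_of :: "nat \<Rightarrow> (nat \<Rightarrow> 'e) \<Rightarrow> 'e set" where
  "loops_of N loop_of = loop_of ` {..<N}"

definition is_quasi_tree ::
  "nat \<Rightarrow> (nat \<Rightarrow> 'e) \<Rightarrow> ('e \<Rightarrow> bool) \<Rightarrow> 'e set \<Rightarrow> bool" where
  "is_quasi_tree N loop_of ori Q \<longleftrightarrow>
     Q \<subseteq> loops_of N loop_of \<and> num_boundary_components N loop_of ori Q = 1"

definition qtree_poly ::
  "nat \<Rightarrow> (nat \<Rightarrow> 'e) \<Rightarrow> ('e \<Rightarrow> bool) \<Rightarrow> ('e \<Rightarrow> complex) \<Rightarrow> complex" where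
  "qtree_poly N loop_of ori z =
     (\<Sum>Q\<in>{Q. is_quasi_tree N loop_of ori Q}. \<Prod>e\<in>Q. z e)"

definition hurwitz_stable :: "'e set \<Rightarrow> (('e \<Rightarrow> complex) \<Rightarrow> complex) \<Rightarrow> bool" where
  "hurwitz_stable V f \<longleftrightarrow> (\<forall>z. (\<forall>e\<in>V. 0 < Re (z e)) \<longrightarrow> f z \<noteq> 0)"

text \<open>Pseudo-orientable: the circle is cut at two points (lying in gaps between ends)
into closed arcs S1, S2; S1 contains exactly the ends at positions c1 < i <= c2
(possibly none, when both cut points lie in the same gap). Orientable loops have both
ends on the same arc, non-orientable loops one end on each arc.\<close>
definition pseudo_orientable ::
  "nat \<Rightarrow> (nat \<Rightarrow> 'e) \<Rightarrow> ('e \<Rightarrow> bool) \<Rightarrow> bool" where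
  "pseudo_orientable N loop_of ori \<longleftrightarrow>
     (\<exists>c1 c2. c1 \<le> c2 \<and> c2 < N \<and>
        (\<forall>i<N. \<forall>j<N. i \<noteq> j \<and> loop_of i = loop_of j \<longrightarrow>
           (ori (loop_of i) \<longleftrightarrow> ((c1 < i \<and> i \<le> c2) \<longleftrightarrow> (c1 < j \<and> j \<le> c2)))))"

text \<open>The bouquet G: 14 positions p0..p13; loops 0,1,2 are non-orientable with ends
{p1,p6}, {p2,p9}, {p5,p12}; loops 3,4,5,6 orientable with ends {p0,p3}, {p4,p7},
{p8,p11}, {p10,p13}.\<close>
definition G_N :: nat where "G_N = 14"

definition G_loop :: "nat \<Rightarrow> nat" where
  "G_loop i = [3, 0, 1, 3, 4, 2, 0, 4, 5, 1, 6, 5, 2, 6] ! i"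

definition G_ori :: "nat \<Rightarrow> bool" where
  "G_ori e \<longleftrightarrow> 3 \<le> e"

end

(*
  Pseudo-orientability would need an arc (c1, c2] of the circle separating the two ends of each
  non-orientable loop and containing both or neither end of each orientable one; a case analysis
  in linear arithmetic shows that no such arc exists.

  For stability, let b be the indicator vector of the non-orientable loops 0, 1, 2, let K be a
  skew-symmetric sign pattern on interlaced pairs of loops, and put A = b b^T + K, Z = diag z;
  the quasi-tree polynomial is det (I + A Z). As the Hermitian part b b^T of A is positive
  semidefinite, (I + A Z) c = 0 with all Re z_i > 0 forces c = 0: pairing the equation with Z c
  gives sum_i Re z_i |c_i|^2 <= 0. No determinant is computed. Instead, for every m an explicit
  adjugate column c of the leading (m + 1)-block satisfies (I + A Z) c = D(m + 1) e_m and
  c_m = D(m), where D(m) is the leading principal minor of order m. Hence D(m + 1) vanishes only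
  where D(m) does, and D(0) = 1. The quasi-trees themselves are found by tracing the boundary
  components of each subbouquet.
*)

theory Submission
  imports Defs
begin

section \<open>Accretive matrices\<close>

lemma ker_id_plus_accretive_diag_trivial:
  fixes A :: "nat \<Rightarrow> nat \<Rightarrow> complex" and z c :: "nat \<Rightarrow> complex"
  assumes accretive: "\<And>u. 0 \<le> Re (\<Sum>i<n. \<Sum>j<n. cnj (u i) * A i j * u j)"
    and pos: "\<And>i. i < n \<Longrightarrow> 0 < Re (z i)"
    and kernel: "\<And>i. i < n \<Longrightarrow> c i + (\<Sum>j<n. A i j * (z j * c j)) = 0"
  shows "\<forall>i<n. c i = 0"
proof -
  define u where "u j = z j * c j" for j
  define q where "q = (\<Sum>i<n. \<Sum>j<n. cnj (u i) * A i j * u j)"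
  have "0 = (\<Sum>i<n. cnj (u i) * (c i + (\<Sum>j<n. A i j * u j)))"
    using kernel by (simp add: u_def)
  also have "\<dots> = (\<Sum>i<n. cnj (u i) * c i) + q"
    by (simp add: q_def distrib_left sum.distrib sum_distrib_left mult.assoc)
  finally have "(\<Sum>i<n. Re (cnj (u i) * c i)) + Re q = 0"
    by (metis Re_sum plus_complex.sel(1) zero_complex.sel(1))
  moreover have Re_term: "Re (cnj (u i) * c i) = Re (z i) * (cmod (c i))\<^sup>2" for i
    by (simp add: u_def cmod_def power2_eq_square algebra_simps)
  moreover have nonneg: "0 \<le> Re (z i) * (cmod (c i))\<^sup>2" if "i < n" for i
    using pos[OF that] by simp
  moreover have "0 \<le> Re q"
    unfolding q_def by (rule accretive)
  moreover have "0 \<le> (\<Sum>i<n. Re (z i) * (cmod (c i))\<^sup>2)"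
    by (rule sum_nonneg) (simp add: nonneg)
  ultimately have "(\<Sum>i<n. Re (z i) * (cmod (c i))\<^sup>2) = 0"
    by (simp only: Re_term)
  then have "Re (z i) * (cmod (c i))\<^sup>2 = 0" if "i < n" for i
    using sum_nonneg_eq_0_iff[of "{..<n}" "\<lambda>i. Re (z i) * (cmod (c i))\<^sup>2"] nonneg that by simp
  moreover have "Re (z i) \<noteq> 0" if "i < n" for i
    using pos[OF that] by simp
  ultimately show ?thesis
    by simp
qed

lemma rank_one_plus_skew_accretive:
  fixes b :: "nat \<Rightarrow> real" and K :: "nat \<Rightarrow> nat \<Rightarrow> real"
  assumes skew: "\<And>i j. K j i = - K i j"
  shows "0 \<le> Re (\<Sum>i<n. \<Sum>j<n. cnj (u i) * of_real (b i * b j + K i j) * u j)"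
proof -
  define s where "s = (\<Sum>j<n. of_real (b j) * u j)"
  define T where "T = (\<Sum>i<n. \<Sum>j<n. cnj (u i) * of_real (K i j) * u j)"
  have "cnj s * s = (\<Sum>i<n. \<Sum>j<n. cnj (u i) * of_real (b i * b j) * u j)"
    unfolding s_def cnj_sum sum_product by (intro sum.cong refl) (simp add: mult_ac)
  then have split: "(\<Sum>i<n. \<Sum>j<n. cnj (u i) * of_real (b i * b j + K i j) * u j) = cnj s * s + T"
    by (simp add: T_def distrib_left distrib_right sum.distrib)
  have "cnj (cnj (u i) * of_real (K i j) * u j) = - (cnj (u j) * of_real (K j i) * u i)" for i j
    by (simp add: skew[of i j] mult_ac)
  then have "cnj T = (\<Sum>j<n. \<Sum>i<n. - (cnj (u j) * of_real (K j i) * u i))"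
    unfolding T_def cnj_sum by (subst sum.swap) simp
  then have "cnj T = - T"
    by (simp add: T_def sum_negf)
  then have "Re (cnj T) = Re (- T)"
    by (simp only:)
  then have "Re T = 0"
    by simp
  then show ?thesis
    unfolding split by (simp add: complex_mult_cnj cmod_def)
qed

section \<open>Counting boundary components by face tracing\<close>

lemma card_quotient_rtrancl_eq_1_iff:
  assumes "sym R" "R \<subseteq> A \<times> A" "x \<in> A"
  shows "card (A // R\<^sup>*) = 1 \<longleftrightarrow> (\<forall>y\<in>A. (x, y) \<in> R\<^sup>*)"
proof
  assume "card (A // R\<^sup>*) = 1"
  then obtain C where C: "A // R\<^sup>* = {C}"
    using card_1_singletonE by blast
  show "\<forall>y\<in>A. (x, y) \<in> R\<^sup>*"
  proof
    fix y assume "y \<in> A"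
    have "R\<^sup>* `` {x} = C" "R\<^sup>* `` {y} = C"
      using quotientI[OF \<open>x \<in> A\<close>, of "R\<^sup>*"] quotientI[OF \<open>y \<in> A\<close>, of "R\<^sup>*"] C by blast+
    then have "y \<in> R\<^sup>* `` {x}"
      by blast
    then show "(x, y) \<in> R\<^sup>*"
      by simp
  qed
next
  assume reach: "\<forall>y\<in>A. (x, y) \<in> R\<^sup>*"
  have closed: "w \<in> A" if "(y, w) \<in> R\<^sup>*" "y \<in> A" for y w
    using that by (induction rule: rtrancl_induct) (use assms(2) in blast)+
  have "R\<^sup>* `` {y} = A" if "y \<in> A" for y
  proof
    show "R\<^sup>* `` {y} \<subseteq> A"
      using closed that by blast
    have "(y, x) \<in> R\<^sup>*"
      using reach that sym_rtrancl[OF assms(1)] by (meson symD)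
    then show "A \<subseteq> R\<^sup>* `` {y}"
      using reach by (meson Image_singleton_iff rtrancl_trans subsetI)
  qed
  then have "A // R\<^sup>* = {A}"
    using assms(3) unfolding quotient_def by blast
  then show "card (A // R\<^sup>*) = 1"
    by simp
qed

lemma Suc_mod_eq_iff:
  assumes "i < N" "j < N"
  shows "i = Suc j mod N \<longleftrightarrow> j = (i + N - 1) mod N"
proof -
  have "(i + N - 1) mod N = (if i = 0 then N - 1 else i - 1)"
  proof (cases "i = 0")
    case False
    then have "i + N - 1 = (i - 1) + N"
      by simp
    then show ?thesis
      using False assms(1) by (metis less_imp_diff_less mod_add_self2 mod_less)
  qed (use assms in simp)
  moreover have "Suc j mod N = (if Suc j = N then 0 else Suc j)"
    using assms(2) by (simp add: mod_Suc)
  ultimately show ?thesis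
    using assms by auto
qed

lemma setcompr_less_Suc: "{g k | k. k < Suc n} = insert (g 0) {g (Suc k) | k. k < n}"
  by (auto simp: less_Suc_eq_0_disj)

lemma funpow_cycle_pred:
  assumes "(f ^^ m) x = x" "0 < m" "k < m"
  shows "\<exists>j<m. (f ^^ k) x = f ((f ^^ j) x)"
proof (cases k)
  case 0
  obtain n where "m = Suc n"
    using assms(2) by (cases m) auto
  then show ?thesis
    using 0 assms(1) by (intro exI[of _ n]) simp_all
next
  case (Suc j)
  then show ?thesis
    using assms(3) by (intro exI[of _ j]) simp
qed

lemma funpow_cycle_succ:
  assumes "(f ^^ m) x = x" "k < m"
  shows "\<exists>j<m. f ((f ^^ k) x) = (f ^^ j) x"
proof (cases "Suc k = m")
  case True
  then show ?thesis
    using assms by (intro exI[of _ 0]) auto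
next
  case False
  then show ?thesis
    using assms(2) by (intro exI[of _ "Suc k"]) simp
qed

locale bouquet =
  fixes N :: nat and loop_of :: "nat \<Rightarrow> 'e" and ori :: "'e \<Rightarrow> bool" and partner :: "nat \<Rightarrow> nat"
  assumes N_pos: "0 < N"
    and partner_less: "i < N \<Longrightarrow> partner i < N"
    and other_end_iff: "i < N \<Longrightarrow> j < N \<Longrightarrow> (j \<noteq> i \<and> loop_of j = loop_of i) \<longleftrightarrow> j = partner i"
begin

lemma partner_partner: "i < N \<Longrightarrow> partner (partner i) = i"
  using other_end_iff[of i "partner i"] other_end_iff[of "partner i" i] partner_less by metis

lemma loop_of_partner: "i < N \<Longrightarrow> loop_of (partner i) = loop_of i"
  using other_end_iff[of i "partner i"] partner_less by simp

(* Every point lies on one vertex arc (arc_next) and one side of a segment or loop (side_next),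
   so face_step traces a boundary component two points at a time. *)
definition arc_next :: "nat \<times> bool \<Rightarrow> nat \<times> bool" where
  "arc_next x = (if snd x then (Suc (fst x) mod N, False) else ((fst x + N - 1) mod N, True))"

definition side_next :: "'e set \<Rightarrow> nat \<times> bool \<Rightarrow> nat \<times> bool" where
  "side_next Q x =
     (if loop_of (fst x) \<in> Q
      then (partner (fst x), if ori (loop_of (fst x)) then \<not> snd x else snd x)
      else (fst x, \<not> snd x))"

definition face_step :: "'e set \<Rightarrow> nat \<times> bool \<Rightarrow> nat \<times> bool" where
  "face_step Q x = arc_next (side_next Q x)"

fun face_walk :: "'e set \<Rightarrow> nat \<times> bool \<Rightarrow> nat \<Rightarrow> (nat \<times> bool) list" where
  "face_walk Q x 0 = []"
| "face_walk Q x (Suc n) = x # side_next Q x # face_walk Q (face_step Q x) n"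

fun face_orbit :: "'e set \<Rightarrow> nat \<times> bool \<Rightarrow> nat \<Rightarrow> (nat \<times> bool) list" where
  "face_orbit Q x 0 = []"
| "face_orbit Q x (Suc n) = x # face_orbit Q (face_step Q x) n"

lemma face_walk_numeral:
  "face_walk Q x (numeral k) = x # side_next Q x # face_walk Q (face_step Q x) (pred_numeral k)"
  by (simp add: numeral_eq_Suc)

lemma face_orbit_numeral:
  "face_orbit Q x (numeral k) = x # face_orbit Q (face_step Q x) (pred_numeral k)"
  by (simp add: numeral_eq_Suc)

abbreviation points :: "(nat \<times> bool) set" where
  "points \<equiv> bdry_points N"

lemma in_points_iff: "x \<in> points \<longleftrightarrow> fst x < N"
  by (cases x) (simp add: bdry_points_def)

lemma card_points: "card points = 2 * N"
  by (simp add: bdry_points_def card_cartesian_product)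

lemma arc_next_in_points: "arc_next x \<in> points"
  using N_pos by (simp add: in_points_iff arc_next_def)

lemma side_next_in_points: "x \<in> points \<Longrightarrow> side_next Q x \<in> points"
  using partner_less by (simp add: in_points_iff side_next_def)

lemma face_step_in_points: "x \<in> points \<Longrightarrow> face_step Q x \<in> points"
  by (simp add: face_step_def arc_next_in_points)

lemma funpow_face_step_in_points: "x \<in> points \<Longrightarrow> (face_step Q ^^ k) x \<in> points"
  by (induction k) (simp_all add: face_step_in_points)

lemma arc_next_arc_next:
  assumes "x \<in> points"
  shows "arc_next (arc_next x) = x"
proof (cases x)
  case (Pair i s)
  then have "i < N"
    using assms by (simp add: in_points_iff)
  then have "(Suc i mod N + N - 1) mod N = i" "Suc ((i + N - 1) mod N) mod N = i"
    using Suc_mod_eq_iff[of "Suc i mod N" N i] Suc_mod_eq_iff[of i N "(i + N - 1) mod N"] N_pos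
    by simp_all
  then show ?thesis
    using Pair by (simp add: arc_next_def)
qed

lemma side_next_side_next: "x \<in> points \<Longrightarrow> side_next Q (side_next Q x) = x"
  by (cases x) (auto simp: in_points_iff side_next_def partner_partner loop_of_partner)

definition bdry_rel :: "'e set \<Rightarrow> ((nat \<times> bool) \<times> (nat \<times> bool)) set" where
  "bdry_rel Q = {(x, y). x \<in> points \<and> y \<in> points \<and> bdry_adj N loop_of ori Q x y}"

lemma bdry_rel_iff:
  "(x, y) \<in> bdry_rel Q \<longleftrightarrow> x \<in> points \<and> y \<in> points \<and> (y = arc_next x \<or> y = side_next Q x)"
proof (cases "x \<in> points \<and> y \<in> points")
  case True
  obtain i s j t where xy: "x = (i, s)" "y = (j, t)" and "i < N" "j < N"
    using True by (cases x, cases y) (auto simp: in_points_iff)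
  then have "(j \<noteq> i \<and> loop_of j = loop_of i) \<longleftrightarrow> j = partner i"
    and "i = Suc j mod N \<longleftrightarrow> j = (i + N - 1) mod N"
    using other_end_iff Suc_mod_eq_iff by blast+
  then show ?thesis
    using True \<open>i < N\<close> \<open>j < N\<close> unfolding xy bdry_rel_def bdry_adj_def arc_next_def side_next_def
    by (cases s; cases t) auto
qed (auto simp: bdry_rel_def)

lemma sym_bdry_rel: "sym (bdry_rel Q)"
  unfolding sym_def bdry_rel_iff using arc_next_arc_next side_next_side_next by metis

lemma num_boundary_components_eq_1_iff:
  assumes "x \<in> points"
  shows "num_boundary_components N loop_of ori Q = 1 \<longleftrightarrow> (\<forall>y\<in>points. (x, y) \<in> (bdry_rel Q)\<^sup>*)"
proof -
  have "num_boundary_components N loop_of ori Q = card (points // (bdry_rel Q)\<^sup>*)"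
    by (simp add: num_boundary_components_def bdry_rel_def)
  moreover have "bdry_rel Q \<subseteq> points \<times> points"
    by (auto simp: bdry_rel_def)
  ultimately show ?thesis
    using card_quotient_rtrancl_eq_1_iff[OF sym_bdry_rel] assms by simp
qed

lemma set_face_walk:
  "set (face_walk Q x n) = {(face_step Q ^^ k) x | k. k < n} \<union> {side_next Q ((face_step Q ^^ k) x) | k. k < n}"
proof (induction n arbitrary: x)
  case (Suc n)
  then show ?case
    using Suc.IH[of "face_step Q x"] by (auto simp: setcompr_less_Suc funpow_swap1)
qed simp

lemma face_walk_reachable:
  "x \<in> points \<Longrightarrow> y \<in> set (face_walk Q x n) \<Longrightarrow> (x, y) \<in> (bdry_rel Q)\<^sup>*"
proof (induction n arbitrary: x)
  case (Suc n)
  have side: "(x, side_next Q x) \<in> bdry_rel Q"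
    using Suc.prems(1) side_next_in_points by (simp add: bdry_rel_iff)
  moreover have "(side_next Q x, face_step Q x) \<in> bdry_rel Q"
    using Suc.prems(1) side_next_in_points arc_next_in_points by (simp add: bdry_rel_iff face_step_def)
  moreover have "y \<in> set (face_walk Q (face_step Q x) n) \<Longrightarrow> (face_step Q x, y) \<in> (bdry_rel Q)\<^sup>*"
    using Suc.IH face_step_in_points Suc.prems(1) by blast
  ultimately show ?case
    using Suc.prems(2) by (auto intro: converse_rtrancl_into_rtrancl)
qed simp

lemma face_walk_in_points: "x \<in> points \<Longrightarrow> set (face_walk Q x n) \<subseteq> points"
  by (induction n arbitrary: x) (simp_all add: side_next_in_points face_step_in_points)

lemma length_face_walk: "length (face_walk Q x n) = 2 * n"
  by (induction n arbitrary: x) simp_all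

lemma set_face_orbit: "set (face_orbit Q x n) = {(face_step Q ^^ k) x | k. k < n}"
proof (induction n arbitrary: x)
  case (Suc n)
  then show ?case
    using Suc.IH[of "face_step Q x"] by (auto simp: setcompr_less_Suc funpow_swap1)
qed simp

theorem one_component_if_distinct_face_walk:
  assumes "x \<in> points" "distinct (face_walk Q x N)"
  shows "num_boundary_components N loop_of ori Q = 1"
proof -
  have "card (set (face_walk Q x N)) = card points"
    using distinct_card[OF assms(2)] by (simp add: length_face_walk card_points)
  then have "set (face_walk Q x N) = points"
    using face_walk_in_points[OF assms(1)] by (simp add: bdry_points_def card_subset_eq)
  then show ?thesis
    using face_walk_reachable[OF assms(1)] num_boundary_components_eq_1_iff[OF assms(1)] by blast
qed

lemma face_walk_closed:
  assumes x: "x \<in> points" and cycle: "(face_step Q ^^ m) x = x" "0 < m"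
    and y: "y \<in> set (face_walk Q x m)" and yw: "(y, w) \<in> bdry_rel Q"
  shows "w \<in> set (face_walk Q x m)"
proof -
  define p where "p k = (face_step Q ^^ k) x" for k
  have p_in: "p k \<in> points" for k
    unfolding p_def by (rule funpow_face_step_in_points[OF x])
  have walk_iff: "v \<in> set (face_walk Q x m) \<longleftrightarrow> (\<exists>k<m. v = p k \<or> v = side_next Q (p k))" for v
    by (auto simp: set_face_walk p_def)
  obtain k where k: "k < m" "y = p k \<or> y = side_next Q (p k)"
    using y unfolding walk_iff by blast
  have "w = arc_next y \<or> w = side_next Q y"
    using yw by (simp add: bdry_rel_iff)
  then consider "y = p k" "w = arc_next y" | "y = p k" "w = side_next Q y"
    | "y = side_next Q (p k)" "w = arc_next y" | "y = side_next Q (p k)" "w = side_next Q y"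
    using k(2) by blast
  then show ?thesis
  proof cases
    case 1
    obtain j where "j < m" "p k = face_step Q (p j)"
      using funpow_cycle_pred[OF cycle k(1)] by (auto simp: p_def)
    then have "w = side_next Q (p j)"
      using 1 arc_next_arc_next side_next_in_points p_in by (simp add: face_step_def)
    then show ?thesis
      using \<open>j < m\<close> unfolding walk_iff by blast
  next
    case 2
    then show ?thesis
      using k(1) unfolding walk_iff by blast
  next
    case 3
    obtain j where "j < m" "face_step Q (p k) = p j"
      using funpow_cycle_succ[OF cycle(1) k(1)] by (auto simp: p_def)
    then have "w = p j"
      using 3 by (simp add: face_step_def)
    then show ?thesis
      using \<open>j < m\<close> unfolding walk_iff by blast
  next
    case 4
    then have "w = p k"
      using side_next_side_next p_in by simp
    then show ?thesis
      using k(1) unfolding walk_iff by blast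
  qed
qed

(* If the face closes after m < N steps, its 2 m points form a union of components. *)
theorem several_components_if_face_closes_early:
  assumes x: "x \<in> points" and closes: "x \<in> set (face_orbit Q (face_step Q x) (N - 1))"
  shows "num_boundary_components N loop_of ori Q \<noteq> 1"
proof -
  obtain k where k: "k < N - 1" "(face_step Q ^^ k) (face_step Q x) = x"
    using closes by (auto simp: set_face_orbit)
  then have cycle: "(face_step Q ^^ Suc k) x = x" "0 < Suc k"
    by (simp_all only: funpow_Suc_right comp_apply zero_less_Suc)
  define C where "C = set (face_walk Q x (Suc k))"
  have reach: "y \<in> C" if "(x, y) \<in> (bdry_rel Q)\<^sup>*" for y
    using that
  proof (induction rule: rtrancl_induct)
    case base
    show ?case
      by (simp add: C_def)
  next
    case (step y w)
    then show ?case
      using face_walk_closed[OF x cycle] unfolding C_def by blast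
  qed
  have "card C < card points"
    using k(1) card_length[of "face_walk Q x (Suc k)"] by (simp add: C_def length_face_walk card_points)
  then have "\<not> points \<subseteq> C"
    using card_mono[of C points] by (auto simp: C_def)
  then have "\<not> (\<forall>y\<in>points. (x, y) \<in> (bdry_rel Q)\<^sup>*)"
    using reach by blast
  then show ?thesis
    using num_boundary_components_eq_1_iff[OF x] by simp
qed

end

section \<open>The bouquet G\<close>

definition G_partner :: "nat \<Rightarrow> nat" where
  "G_partner i = [3, 6, 9, 0, 7, 12, 1, 4, 11, 2, 13, 8, 5, 10] ! i"

interpretation G: bouquet 14 G_loop G_ori G_partner
proof
  have "\<forall>i\<in>{..<14}. G_partner i < 14"
    by (simp add: lessThan_nat_numeral G_partner_def)
  then show "i < 14 \<Longrightarrow> G_partner i < 14" for i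
    by simp
  have "\<forall>i\<in>{..<14}. \<forall>j\<in>{..<14}. (j \<noteq> i \<and> G_loop j = G_loop i) \<longleftrightarrow> j = G_partner i"
    by (simp add: lessThan_nat_numeral G_loop_def G_partner_def)
  then show "i < 14 \<Longrightarrow> j < 14 \<Longrightarrow> (j \<noteq> i \<and> G_loop j = G_loop i) \<longleftrightarrow> j = G_partner i" for i j
    by simp
qed simp

lemma G_loops: "loops_of G_N G_loop = {0, 1, 2, 3, 4, 5, 6}"
  by (auto simp: loops_of_def G_N_def lessThan_nat_numeral G_loop_def)

lemma G_quasi_tree:
  assumes "Q \<subseteq> {0, 1, 2, 3, 4, 5, 6}" "distinct (G.face_walk Q (0, False) 14)"
  shows "is_quasi_tree G_N G_loop G_ori Q"
proof -
  have "num_boundary_components 14 G_loop G_ori Q = 1"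
    by (rule G.one_component_if_distinct_face_walk) (use assms(2) in \<open>simp_all add: bdry_points_def\<close>)
  then show ?thesis
    using assms(1) unfolding is_quasi_tree_def G_loops by (simp add: G_N_def)
qed

lemma G_not_quasi_tree:
  "(0, False) \<in> set (G.face_orbit Q (G.face_step Q (0, False)) 13) \<Longrightarrow>
     \<not> is_quasi_tree G_N G_loop G_ori Q"
  unfolding is_quasi_tree_def G_N_def
  using G.several_components_if_face_closes_early[of "(0, False)" Q] by (simp add: bdry_points_def)

lemma G_not_pseudo_orientable: "\<not> pseudo_orientable G_N G_loop G_ori"
proof
  assume "pseudo_orientable G_N G_loop G_ori"
  then obtain c1 c2 where "c1 \<le> c2" and
    cut: "\<And>i j. i < 14 \<Longrightarrow> j < 14 \<Longrightarrow> i \<noteq> j \<and> G_loop i = G_loop j \<Longrightarrow>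
            G_ori (G_loop i) \<longleftrightarrow> ((c1 < i \<and> i \<le> c2) \<longleftrightarrow> (c1 < j \<and> j \<le> c2))"
    unfolding pseudo_orientable_def G_N_def by blast
  have "(c1 < 0 \<and> 0 \<le> c2) = (c1 < 3 \<and> 3 \<le> c2)" "(c1 < 4 \<and> 4 \<le> c2) = (c1 < 7 \<and> 7 \<le> c2)"
    "(c1 < 8 \<and> 8 \<le> c2) = (c1 < 11 \<and> 11 \<le> c2)" "(c1 < 10 \<and> 10 \<le> c2) = (c1 < 13 \<and> 13 \<le> c2)"
    "(c1 < 1 \<and> 1 \<le> c2) \<noteq> (c1 < 6 \<and> 6 \<le> c2)" "(c1 < 2 \<and> 2 \<le> c2) \<noteq> (c1 < 9 \<and> 9 \<le> c2)"
    "(c1 < 5 \<and> 5 \<le> c2) \<noteq> (c1 < 12 \<and> 12 \<le> c2)"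
    using cut[of 0 3] cut[of 4 7] cut[of 8 11] cut[of 10 13] cut[of 1 6] cut[of 2 9] cut[of 5 12]
    by (simp_all add: G_loop_def G_ori_def)
  then show False
    using \<open>c1 \<le> c2\<close> by presburger
qed

definition G_poly :: "(nat \<Rightarrow> complex) \<Rightarrow> complex" where
  "G_poly z =
     1 + z 0 + z 1 + z 2 + z 0 * z 3 + z 0 * z 4 + z 1 * z 3 + z 1 * z 5 + z 2 * z 4 +
     z 2 * z 6 + z 5 * z 6 + z 0 * z 1 * z 4 + z 0 * z 1 * z 5 + z 0 * z 2 * z 3 +
     z 0 * z 2 * z 6 + z 0 * z 5 * z 6 + z 1 * z 2 * z 3 + z 1 * z 2 * z 4 +
     z 1 * z 2 * z 5 + z 1 * z 2 * z 6 + z 1 * z 5 * z 6 + z 2 * z 5 * z 6 +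
     z 0 * z 1 * z 3 * z 4 + z 0 * z 1 * z 3 * z 5 + z 0 * z 1 * z 4 * z 5 +
     z 0 * z 2 * z 3 * z 4 + z 0 * z 2 * z 3 * z 6 + z 0 * z 2 * z 4 * z 6 +
     z 0 * z 3 * z 5 * z 6 + z 0 * z 4 * z 5 * z 6 + z 1 * z 2 * z 3 * z 4 +
     z 1 * z 2 * z 3 * z 6 + z 1 * z 2 * z 4 * z 5 + z 1 * z 2 * z 5 * z 6 +
     z 1 * z 3 * z 5 * z 6 + z 2 * z 4 * z 5 * z 6 + z 0 * z 1 * z 2 * z 3 * z 4 +
     z 0 * z 1 * z 2 * z 3 * z 5 + z 0 * z 1 * z 2 * z 4 * z 6 +
     z 0 * z 1 * z 2 * z 5 * z 6 + z 0 * z 1 * z 4 * z 5 * z 6 +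
     z 0 * z 2 * z 3 * z 5 * z 6 + z 1 * z 2 * z 3 * z 5 * z 6 +
     z 1 * z 2 * z 4 * z 5 * z 6 + z 0 * z 1 * z 2 * z 3 * z 4 * z 5 +
     z 0 * z 1 * z 2 * z 3 * z 4 * z 6 + z 0 * z 1 * z 2 * z 3 * z 5 * z 6 +
     z 0 * z 1 * z 2 * z 4 * z 5 * z 6 + z 0 * z 1 * z 3 * z 4 * z 5 * z 6 +
     z 0 * z 2 * z 3 * z 4 * z 5 * z 6 + z 1 * z 2 * z 3 * z 4 * z 5 * z 6 +
     z 0 * z 1 * z 2 * z 3 * z 4 * z 5 * z 6"

lemma sum_Pow_insert:
  assumes "finite A" "a \<notin> A"
  shows "(\<Sum>Q\<in>Pow (insert a A). g Q) = (\<Sum>Q\<in>Pow A. g Q) + (\<Sum>Q\<in>Pow A. g (insert a Q))"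
proof -
  have "inj_on (insert a) (Pow A)"
    using assms(2) by (intro inj_onI) (metis PowD insert_ident subsetD)
  then have "(\<Sum>Q\<in>insert a ` Pow A. g Q) = (\<Sum>Q\<in>Pow A. g (insert a Q))"
    by (simp add: sum.reindex)
  moreover have "(\<Sum>Q\<in>Pow (insert a A). g Q) = (\<Sum>Q\<in>Pow A. g Q) + (\<Sum>Q\<in>insert a ` Pow A. g Q)"
    unfolding Pow_insert using assms by (intro sum.union_disjoint) auto
  ultimately show ?thesis
    by simp
qed

lemma G_qtree_poly: "qtree_poly G_N G_loop G_ori z = G_poly z"
proof -
  have quasi_trees: "{Q. is_quasi_tree G_N G_loop G_ori Q} =
        {Q \<in> Pow {0, 1, 2, 3, 4, 5, 6}. is_quasi_tree G_N G_loop G_ori Q}"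
    by (auto simp: is_quasi_tree_def G_loops)
  have "qtree_poly G_N G_loop G_ori z =
      (\<Sum>Q\<in>Pow {0, 1, 2, 3, 4, 5, 6}. if is_quasi_tree G_N G_loop G_ori Q then \<Prod>e\<in>Q. z e else 0)"
    unfolding qtree_poly_def quasi_trees by (rule sum.inter_filter) simp
  \<comment> \<open>each of the 128 subsets is decided by one of the two tracing criteria\<close>
  also have "\<dots> = G_poly z"
    apply (simp add: sum_Pow_insert del: Pow_insert)
    apply (simp add: G_quasi_tree G_not_quasi_tree G.face_walk_numeral G.face_orbit_numeral
        G.face_step_def G.side_next_def G.arc_next_def G_loop_def G_ori_def G_partner_def)
    apply (simp add: G_poly_def ac_simps)
    done
  finally show ?thesis .
qed

section \<open>Stability of the quasi-tree polynomial of G\<close>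

(* A i j = G_nonori i * G_nonori j + G_skew i j is a signed interlacement matrix of G: it is
   nonzero exactly when the loops i and j interlace or i = j is non-orientable, and its principal
   minor on Q is 1 if Q is a quasi-tree and 0 otherwise, so that G_poly z = det (I + A diag z). *)
definition G_nonori :: "nat \<Rightarrow> real" where
  "G_nonori i = (if G_ori i then 0 else 1)"

definition G_skew :: "nat \<Rightarrow> nat \<Rightarrow> real" where
  "G_skew i j =
     (if (i, j) \<in> {(0, 3), (0, 4), (1, 3), (1, 5), (2, 4), (2, 6), (5, 6)} then 1
      else if (j, i) \<in> {(0, 3), (0, 4), (1, 3), (1, 5), (2, 4), (2, 6), (5, 6)} then -1
      else 0)"

lemma G_skew_swap: "G_skew j i = - G_skew i j"
  by (simp add: G_skew_def)

(* G_poly (truncate_vars m z) is the leading principal minor of order m of I + A diag z. *)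
definition truncate_vars :: "nat \<Rightarrow> (nat \<Rightarrow> complex) \<Rightarrow> nat \<Rightarrow> complex" where
  "truncate_vars k z j = (if j < k then z j else 0)"

(* Row m lists the first m entries of the last column of the adjugate of the leading
   (m + 1)-block of I + A diag z; G_adj_column completes it by the leading minor of order m. *)
definition G_cofactors :: "(nat \<Rightarrow> complex) \<Rightarrow> complex list list" where
  "G_cofactors z =
    [[],
     [- z 1],
     [- z 2,
      - z 2],
     [- z 3 - z 2 * z 3,
      - z 3 - z 2 * z 3,
      z 0 * z 3 + z 1 * z 3],
     [- z 4 - z 1 * z 4 - z 1 * z 3 * z 4 - z 1 * z 2 * z 3 * z 4,
      z 0 * z 4 + z 2 * z 4 + z 0 * z 3 * z 4 + z 0 * z 2 * z 3 * z 4,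
      - z 4 - z 1 * z 4 - z 0 * z 3 * z 4 - z 1 * z 3 * z 4,
      - z 0 * z 4 + z 1 * z 2 * z 4],
     [z 1 * z 5 + z 1 * z 3 * z 5 + z 1 * z 2 * z 3 * z 5 + z 1 * z 2 * z 3 * z 4 * z 5,
      - z 5 - z 0 * z 5 - z 2 * z 5 - z 0 * z 3 * z 5 - z 0 * z 4 * z 5 - z 2 * z 4 * z 5 -
       z 0 * z 2 * z 3 * z 5 - z 0 * z 2 * z 3 * z 4 * z 5,
      z 1 * z 5 - z 0 * z 1 * z 3 * z 4 * z 5,
      - z 1 * z 5 - z 1 * z 2 * z 5 - z 0 * z 1 * z 4 * z 5 - z 1 * z 2 * z 4 * z 5,
      z 0 * z 1 * z 5 + z 1 * z 2 * z 5 + z 0 * z 1 * z 3 * z 5 +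
       z 0 * z 1 * z 2 * z 3 * z 5],
     [z 2 * z 6 - z 1 * z 5 * z 6 + z 2 * z 4 * z 6 + z 1 * z 2 * z 4 * z 6 +
       z 1 * z 2 * z 5 * z 6 - z 1 * z 3 * z 5 * z 6 + z 1 * z 2 * z 3 * z 4 * z 6 -
       z 1 * z 2 * z 3 * z 5 * z 6 + z 1 * z 2 * z 4 * z 5 * z 6 -
       z 1 * z 2 * z 3 * z 4 * z 5 * z 6,
      z 2 * z 6 + z 5 * z 6 + z 0 * z 5 * z 6 + z 2 * z 5 * z 6 + z 0 * z 3 * z 5 * z 6 +
       z 0 * z 4 * z 5 * z 6 + z 2 * z 4 * z 5 * z 6 - z 0 * z 2 * z 3 * z 4 * z 6 +
       z 0 * z 2 * z 3 * z 5 * z 6 + z 0 * z 2 * z 3 * z 4 * z 5 * z 6,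
      - z 6 - z 0 * z 6 - z 1 * z 6 - z 0 * z 3 * z 6 - z 0 * z 4 * z 6 - z 1 * z 3 * z 6 -
       2 * z 1 * z 5 * z 6 - z 0 * z 1 * z 4 * z 6 - z 0 * z 1 * z 5 * z 6 -
       z 0 * z 1 * z 3 * z 4 * z 6 - z 0 * z 1 * z 3 * z 5 * z 6 -
       z 0 * z 1 * z 4 * z 5 * z 6 + z 0 * z 1 * z 3 * z 4 * z 5 * z 6,
      z 0 * z 2 * z 6 + z 1 * z 2 * z 6 + z 1 * z 5 * z 6 + z 0 * z 2 * z 4 * z 6 +
       z 1 * z 2 * z 5 * z 6 + z 0 * z 1 * z 2 * z 4 * z 6 + z 0 * z 1 * z 2 * z 5 * z 6 +
       z 0 * z 1 * z 4 * z 5 * z 6 + z 1 * z 2 * z 4 * z 5 * z 6 +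
       z 0 * z 1 * z 2 * z 4 * z 5 * z 6,
      - z 2 * z 6 - z 1 * z 2 * z 6 - z 0 * z 1 * z 5 * z 6 - z 0 * z 2 * z 3 * z 6 -
       z 1 * z 2 * z 3 * z 6 - 2 * z 1 * z 2 * z 5 * z 6 - z 0 * z 1 * z 3 * z 5 * z 6 -
       2 * z 0 * z 1 * z 2 * z 3 * z 5 * z 6,
      - z 6 - z 0 * z 6 - z 1 * z 6 - z 2 * z 6 - z 0 * z 3 * z 6 - z 0 * z 4 * z 6 +
       z 1 * z 2 * z 6 - z 1 * z 3 * z 6 - z 2 * z 4 * z 6 - z 0 * z 1 * z 4 * z 6 -
       z 0 * z 2 * z 3 * z 6 - z 1 * z 2 * z 3 * z 6 - z 1 * z 2 * z 4 * z 6 -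
       z 0 * z 1 * z 3 * z 4 * z 6 - z 0 * z 2 * z 3 * z 4 * z 6 -
       z 1 * z 2 * z 3 * z 4 * z 6 - 2 * z 0 * z 1 * z 2 * z 3 * z 4 * z 6]]"

definition G_adj_column :: "nat \<Rightarrow> (nat \<Rightarrow> complex) \<Rightarrow> nat \<Rightarrow> complex" where
  "G_adj_column m z i = (if i < m then G_cofactors z ! m ! i else G_poly (truncate_vars m z))"

lemma G_adj_column_equations:
  "\<forall>m\<in>{0, 1, 2, 3, 4, 5, 6}. \<forall>i\<in>{0, 1, 2, 3, 4, 5, 6}. i \<le> m \<longrightarrow>
     G_adj_column m z i +
       (\<Sum>j<Suc m. of_real (G_nonori i * G_nonori j + G_skew i j) * (z j * G_adj_column m z j)) =
     (if i = m then G_poly (truncate_vars (Suc m) z) else 0)"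
  unfolding ball_simps
  apply (intro conjI)
  apply (simp_all add: lessThan_nat_numeral G_adj_column_def G_cofactors_def G_nonori_def G_ori_def
      G_skew_def)
  apply (simp_all add: G_poly_def truncate_vars_def)
  apply (simp_all add: algebra_simps)
  done

lemma G_poly_truncate_nonzero:
  assumes "m \<le> 7" "\<forall>i<m. 0 < Re (z i)"
  shows "G_poly (truncate_vars m z) \<noteq> 0"
  using assms
proof (induction m)
  case 0
  show ?case
    by (simp add: G_poly_def truncate_vars_def)
next
  case (Suc m)
  show ?case
  proof
    assume vanish: "G_poly (truncate_vars (Suc m) z) = 0"
    have "G_adj_column m z i +
        (\<Sum>j<Suc m. of_real (G_nonori i * G_nonori j + G_skew i j) * (z j * G_adj_column m z j)) = 0"
      if "i < Suc m" for i
    proof -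
      have "m \<in> {0, 1, 2, 3, 4, 5, 6}" "i \<in> {0, 1, 2, 3, 4, 5, 6}" "i \<le> m"
        using Suc.prems(1) that by auto
      then show ?thesis
        using G_adj_column_equations[of z, rule_format] vanish by simp
    qed
    then have "\<forall>i<Suc m. G_adj_column m z i = 0"
      using ker_id_plus_accretive_diag_trivial
          [OF rank_one_plus_skew_accretive[where b = G_nonori and K = G_skew, OF G_skew_swap]]
        Suc.prems(2) by blast
    then have "G_adj_column m z m = 0"
      by simp
    then have "G_poly (truncate_vars m z) = 0"
      by (simp add: G_adj_column_def)
    with Suc show False
      by simp
  qed
qed

lemma G_poly_nonzero:
  assumes "\<forall>i<7. 0 < Re (z i)"
  shows "G_poly z \<noteq> 0"
proof -
  have "G_poly (truncate_vars 7 z) = G_poly z"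
    by (simp add: G_poly_def truncate_vars_def)
  then show ?thesis
    using G_poly_truncate_nonzero[of 7 z] assms by simp
qed

theorem proposition5p9:
  shows "\<not> pseudo_orientable G_N G_loop G_ori \<and>
         hurwitz_stable (loops_of G_N G_loop) (qtree_poly G_N G_loop G_ori)"
proof
  show "\<not> pseudo_orientable G_N G_loop G_ori"
    by (rule G_not_pseudo_orientable)
  show "hurwitz_stable (loops_of G_N G_loop) (qtree_poly G_N G_loop G_ori)"
    unfolding hurwitz_stable_def G_loops G_qtree_poly
  proof (intro allI impI)
    fix z :: "nat \<Rightarrow> complex"
    assume "\<forall>e\<in>{0, 1, 2, 3, 4, 5, 6}. 0 < Re (z e)"
    then have "\<forall>i<7. 0 < Re (z i)"
      by (auto simp: less_Suc_eq numeral_eq_Suc)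
    then show "G_poly z \<noteq> 0"
      by (rule G_poly_nonzero)
  qed
qed

end
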